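(* Let $(X,d)$ be a compact metric space, $f_{0,\infty}=\{f_n\}_{n=0}^\infty$ a sequence of continuous self-maps of $X$, and $A=\{k^i\}_{i=1}^{\infty}$ for some integer $k\geq1$. Then \[h_{A}(f_{0,\infty}^{k^n})=h_{A}(f_{0,\infty}),\quad n\geq1.\]
   Context: $f_i^n=f_{i+n-1}\circ\cdots\circ f_i$ ($n\ge1$), $f_i^0=\mathrm{id}$, $f_i^{-n}(B)=(f_i^n)^{-1}(B)$. For $m\ge1$, the $m$-th compositions system is $f_{0,\infty}^m=\{f_{jm}^m\}_{j=0}^\infty$, i.e. the sequence of maps $f_{jm+m-1}\circ\cdots\circ f_{jm}$. For a sequence $g_{0,\infty}$ of continuous self-maps and a sequence $A=\{a_i\}$ of nonnegative integers, $h_A(g_{0,\infty})=\sup_{\mathscr A}\limsup_{m\to\infty}\frac1m\log\mathcal N(\bigvee_{i=1}^m g_0^{-a_i}\mathscr A)$ over finite open covers $\mathscr A$ of $X$, with $\bigvee$ the common refinement, $g_0^{-a}\mathscr A=\{(g_0^a)^{-1}U:U\in\mathscr A\}$, and $\mathcal N$ the minimal cardinality of a subcover. *)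

theory Defs
  imports "HOL-Analysis.Analysis"
begin

fun iter_from :: "(nat \<Rightarrow> 'a \<Rightarrow> 'a) \<Rightarrow> nat \<Rightarrow> nat \<Rightarrow> 'a \<Rightarrow> 'a" where
  "iter_from f i 0 = id"
| "iter_from f i (Suc n) = f (i + n) \<circ> iter_from f i n"

definition comp_system :: "(nat \<Rightarrow> 'a \<Rightarrow> 'a) \<Rightarrow> nat \<Rightarrow> nat \<Rightarrow> 'a \<Rightarrow> 'a" where
  "comp_system f m = (\<lambda>j. iter_from f (j * m) m)"

definition open_covers :: "'a::topological_space set \<Rightarrow> 'a set set set" where
  "open_covers X = {\<A>. finite \<A> \<and> (\<forall>U\<in>\<A>. openin (top_of_set X) U) \<and> \<Union>\<A> = X}"

definition preimage_cover :: "'a set \<Rightarrow> ('a \<Rightarrow> 'a) \<Rightarrow> 'a set set \<Rightarrow> 'a set set" where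
  "preimage_cover X g \<A> = (\<lambda>U. {x \<in> X. g x \<in> U}) ` \<A>"

definition join_covers :: "nat \<Rightarrow> (nat \<Rightarrow> 'a set set) \<Rightarrow> 'a set set" where
  "join_covers m C = {\<Inter>i\<in>{1..m}. U i | U. \<forall>i\<in>{1..m}. U i \<in> C i}"

definition cover_number :: "'a set \<Rightarrow> 'a set set \<Rightarrow> nat" where
  "cover_number X \<C> = Inf {card \<B> | \<B>. \<B> \<subseteq> \<C> \<and> finite \<B> \<and> X \<subseteq> \<Union>\<B>}"

definition seq_entropy :: "'a::topological_space set \<Rightarrow> (nat \<Rightarrow> nat) \<Rightarrow> (nat \<Rightarrow> 'a \<Rightarrow> 'a) \<Rightarrow> ereal" where
  "seq_entropy X a g = (SUP \<A>\<in>open_covers X.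
      limsup (\<lambda>m. ereal (ln (real (cover_number X
        (join_covers m (\<lambda>i. preimage_cover X (iter_from g 0 (a i)) \<A>)))) / real m)))"

end

theory Submission
  imports Defs
begin

(* Since the blocks of the k^n-th compositions system have length k^n, its time k^i is the time
   k^(i+n) of f. Hence the M-fold refinement defining h_A for the compositions system is the join
   of the f-covers with indices n+1, ..., n+M. This is refined by the join over 1, ..., n+M, whose
   cover number exceeds it by at most the bounded factor N(join over 1, ..., n); neither this
   factor nor the shift from 1/M to 1/(M+n) changes the limsup of (1/M) log N. *)

lemma limsup_ereal_eq_if_diff_tendsto_0:
  fixes x y :: "nat \<Rightarrow> real"
  assumes "(\<lambda>M. x M - y M) \<longlonglongrightarrow> 0"
  shows "limsup (\<lambda>M. ereal (x M)) = limsup (\<lambda>M. ereal (y M))"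
proof -
  have "(\<lambda>M. ereal (x M - y M)) \<longlonglongrightarrow> ereal 0"
    using assms by (intro tendsto_ereal)
  hence "limsup (\<lambda>M. ereal (x M - y M) + ereal (y M)) = ereal 0 + limsup (\<lambda>M. ereal (y M))"
    by (intro ereal_limsup_lim_add) auto
  thus ?thesis by simp
qed

lemma limsup_growth_rate_eq_if_shift_bounded:
  fixes a b :: "nat \<Rightarrow> real"
  assumes b_nonneg: "\<And>M. 0 \<le> b M"
    and lower: "\<And>M. b M \<le> a (M + n)" and upper: "\<And>M. a (M + n) \<le> b M + c"
    and linear: "\<And>M. a M \<le> real M * L"
  shows "limsup (\<lambda>M. ereal (b M / real M)) = limsup (\<lambda>M. ereal (a M / real M))"
proof -
  have bound: "norm (b M / M - a (M + n) / (M + n)) \<le> (c + n * L) / M" if "M \<ge> 1" for M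
  proof -
    have "a (M + n) \<ge> 0" using b_nonneg lower order_trans by blast
    have "(a (M + n) - b M) / M \<le> c / M"
      using upper[of M] by (intro divide_right_mono) auto
    hence close: "\<bar>b M / M - a (M + n) / M\<bar> \<le> c / M"
      using lower[of M] by (simp add: diff_divide_distrib[symmetric])
    have "a (M + n) / M - a (M + n) / (M + n) = a (M + n) * n / (M * real (M + n))"
      using that by (simp add: field_simps)
    also have "\<dots> \<le> (real (M + n) * L) * n / (M * real (M + n))"
      using linear[of "M + n"] that by (intro divide_right_mono mult_right_mono) auto
    also have "\<dots> = n * L / M"
      using that by simp
    finally have shift: "a (M + n) / M - a (M + n) / (M + n) \<le> n * L / M" .
    have "a (M + n) / (M + n) \<le> a (M + n) / M"
      using \<open>a (M + n) \<ge> 0\<close> that by (intro divide_left_mono) auto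
    with close shift show ?thesis
      by (simp add: add_divide_distrib abs_le_iff)
  qed
  have "(\<lambda>M. b M / M - a (M + n) / (M + n)) \<longlonglongrightarrow> 0"
    by (rule Lim_null_comparison[OF _ lim_const_over_n])
      (use bound in \<open>auto simp: eventually_sequentially\<close>)
  hence "limsup (\<lambda>M. ereal (b M / M)) = limsup (\<lambda>M. ereal (a (M + n) / real (M + n)))"
    by (rule limsup_ereal_eq_if_diff_tendsto_0)
  also have "\<dots> = limsup (\<lambda>M. ereal (a M / M))"
    by (rule limsup_shift_k[where u = "\<lambda>M. ereal (a M / real M)"])
  finally show ?thesis .
qed

(* Since ln 0 = 0 in Isabelle, these hold for every natural number; the cover number of a
   join is 0 when X is empty. *)
lemma ln_of_nat_nonneg: "0 \<le> ln (real (N :: nat))"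
  by (cases N) auto

lemma ln_of_nat_mono: "(N :: nat) \<le> N' \<Longrightarrow> ln (real N) \<le> ln (real N')"
  by (cases "N = 0") (auto simp: ln_of_nat_nonneg)

lemma ln_of_nat_mult_le: "ln (real (p * q :: nat)) \<le> ln (real p) + ln (real q)"
  by (cases "p = 0 \<or> q = 0") (auto simp: ln_of_nat_nonneg ln_mult)

lemma ln_of_nat_power: "ln (real (q ^ M :: nat)) = real M * ln (real q)"
  by (cases "q = 0") (auto simp: ln_realpow power_0_left)

lemma cover_number_attained:
  assumes "finite D" "X \<subseteq> \<Union>D"
  shows "\<exists>B\<subseteq>D. finite B \<and> X \<subseteq> \<Union>B \<and> card B = cover_number X D"
proof -
  let ?S = "{card \<B> | \<B>. \<B> \<subseteq> D \<and> finite \<B> \<and> X \<subseteq> \<Union>\<B>}"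
  have "card D \<in> ?S" using assms by auto
  hence "Inf ?S \<in> ?S" by (intro Inf_nat_def1) auto
  then obtain B where "B \<subseteq> D" "finite B" "X \<subseteq> \<Union>B" "card B = Inf ?S" by auto
  moreover have "cover_number X D = Inf ?S" unfolding cover_number_def by (rule refl)
  ultimately show ?thesis by auto
qed

lemma cover_number_le_card:
  assumes "B \<subseteq> D" "finite B" "X \<subseteq> \<Union>B"
  shows "cover_number X D \<le> card B"
  unfolding cover_number_def using assms by (auto intro!: cInf_lower)

lemma cover_number_le_if_refines:
  assumes refines: "\<forall>W\<in>D. \<exists>V\<in>C. W \<subseteq> V" and "finite D" "X \<subseteq> \<Union>D"
  shows "cover_number X C \<le> cover_number X D"
proof -
  obtain B where B: "B \<subseteq> D" "finite B" "X \<subseteq> \<Union>B" "card B = cover_number X D"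
    using cover_number_attained[OF assms(2,3)] by blast
  have "\<forall>W\<in>B. \<exists>V. V \<in> C \<and> W \<subseteq> V" using refines B(1) by blast
  then have "\<exists>g. \<forall>W\<in>B. g W \<in> C \<and> W \<subseteq> g W" by (rule bchoice)
  then obtain g where g: "\<forall>W\<in>B. g W \<in> C \<and> W \<subseteq> g W" ..
  have "cover_number X C \<le> card (g ` B)"
  proof (rule cover_number_le_card)
    show "g ` B \<subseteq> C" "finite (g ` B)" using g B(2) by auto
    show "X \<subseteq> \<Union>(g ` B)" using g B(3) by blast
  qed
  also have "\<dots> \<le> card B"
    using B(2) by (rule card_image_le)
  finally show ?thesis using B(4) by simp
qed

definition join_covers_on :: "'i set \<Rightarrow> ('i \<Rightarrow> 'a set set) \<Rightarrow> 'a set set" where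
  "join_covers_on I C = {\<Inter>i\<in>I. U i | U. \<forall>i\<in>I. U i \<in> C i}"

lemma join_covers_onI:
  "(\<And>i. i \<in> I \<Longrightarrow> U i \<in> C i) \<Longrightarrow> (\<Inter>i\<in>I. U i) \<in> join_covers_on I C"
  unfolding join_covers_on_def by blast

lemma join_covers_onE:
  assumes "W \<in> join_covers_on I C"
  obtains U where "W = (\<Inter>i\<in>I. U i)" "\<And>i. i \<in> I \<Longrightarrow> U i \<in> C i"
  using assms unfolding join_covers_on_def by blast

lemma join_covers_eq_join_covers_on: "join_covers m C = join_covers_on {1..m} C"
  by (simp add: join_covers_def join_covers_on_def)

lemma join_covers_on_eq_image_PiE: "join_covers_on I C = (\<lambda>U. \<Inter>i\<in>I. U i) ` PiE I C"
proof
  show "join_covers_on I C \<subseteq> (\<lambda>U. \<Inter>i\<in>I. U i) ` PiE I C"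
  proof
    fix W assume "W \<in> join_covers_on I C"
    then obtain U where "W = (\<Inter>i\<in>I. U i)" "\<forall>i\<in>I. U i \<in> C i"
      unfolding join_covers_on_def by blast
    hence "restrict U I \<in> PiE I C" "W = (\<Inter>i\<in>I. restrict U I i)" by auto
    thus "W \<in> (\<lambda>U. \<Inter>i\<in>I. U i) ` PiE I C" by blast
  qed
qed (auto simp: join_covers_on_def)

lemma finite_join_covers_on:
  "finite I \<Longrightarrow> (\<And>i. i \<in> I \<Longrightarrow> finite (C i)) \<Longrightarrow> finite (join_covers_on I C)"
  by (simp add: join_covers_on_eq_image_PiE finite_PiE)

lemma card_join_covers_on_le:
  assumes "finite I" "\<And>i. i \<in> I \<Longrightarrow> finite (C i)"
  shows "card (join_covers_on I C) \<le> (\<Prod>i\<in>I. card (C i))"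
proof -
  have "card (join_covers_on I C) \<le> card (PiE I C)"
    unfolding join_covers_on_eq_image_PiE
    using assms by (intro card_image_le) (simp add: finite_PiE)
  thus ?thesis using assms by (simp add: card_PiE)
qed

lemma join_covers_on_covers:
  assumes "\<And>i. i \<in> I \<Longrightarrow> X \<subseteq> \<Union>(C i)"
  shows "X \<subseteq> \<Union>(join_covers_on I C)"
proof
  fix x assume "x \<in> X"
  hence "\<forall>i\<in>I. \<exists>V. V \<in> C i \<and> x \<in> V" using assms by blast
  then have "\<exists>U. \<forall>i\<in>I. U i \<in> C i \<and> x \<in> U i" by (rule bchoice)
  then obtain U where U: "\<forall>i\<in>I. U i \<in> C i \<and> x \<in> U i" ..
  hence "(\<Inter>i\<in>I. U i) \<in> join_covers_on I C" by (intro join_covers_onI) blast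
  moreover have "x \<in> (\<Inter>i\<in>I. U i)" using U by blast
  ultimately show "x \<in> \<Union>(join_covers_on I C)" by blast
qed

lemma join_covers_on_reindex:
  assumes "inj_on h I"
  shows "join_covers_on I (C \<circ> h) = join_covers_on (h ` I) C"
proof
  show "join_covers_on I (C \<circ> h) \<subseteq> join_covers_on (h ` I) C"
  proof
    fix W assume "W \<in> join_covers_on I (C \<circ> h)"
    then obtain U where U: "W = (\<Inter>i\<in>I. U i)" "\<And>i. i \<in> I \<Longrightarrow> U i \<in> C (h i)"
      by (elim join_covers_onE) auto
    have "W = (\<Inter>j\<in>h ` I. U (inv_into I h j))"
      using U(1) assms by (simp add: image_image)
    also have "\<dots> \<in> join_covers_on (h ` I) C"
      using U(2) assms by (intro join_covers_onI) auto
    finally show "W \<in> join_covers_on (h ` I) C" .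
  qed
  show "join_covers_on (h ` I) C \<subseteq> join_covers_on I (C \<circ> h)"
  proof
    fix W assume "W \<in> join_covers_on (h ` I) C"
    then obtain V where V: "W = (\<Inter>j\<in>h ` I. V j)" "\<And>j. j \<in> h ` I \<Longrightarrow> V j \<in> C j"
      by (elim join_covers_onE) auto
    have "W = (\<Inter>i\<in>I. V (h i))"
      using V(1) by (simp add: image_image)
    also have "\<dots> \<in> join_covers_on I (C \<circ> h)"
      using V(2) by (intro join_covers_onI) simp
    finally show "W \<in> join_covers_on I (C \<circ> h)" .
  qed
qed

lemma Int_mem_join_covers_on_Un:
  assumes "I \<inter> J = {}" and P: "P \<in> join_covers_on I C" and Q: "Q \<in> join_covers_on J C"
  shows "P \<inter> Q \<in> join_covers_on (I \<union> J) C"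
proof -
  obtain U where U: "P = (\<Inter>i\<in>I. U i)" "\<And>i. i \<in> I \<Longrightarrow> U i \<in> C i"
    using P by (elim join_covers_onE) blast
  obtain V where V: "Q = (\<Inter>i\<in>J. V i)" "\<And>i. i \<in> J \<Longrightarrow> V i \<in> C i"
    using Q by (elim join_covers_onE) blast
  define W where "W i = (if i \<in> I then U i else V i)" for i
  have "(\<Inter>i\<in>I. W i) = P" using U(1) by (simp add: W_def)
  moreover have "(\<Inter>i\<in>J. W i) = Q"
    unfolding V(1) using assms(1) by (intro INF_cong) (auto simp: W_def)
  ultimately have "P \<inter> Q = (\<Inter>i\<in>I \<union> J. W i)" by (simp add: INF_union)
  also have "\<dots> \<in> join_covers_on (I \<union> J) C"
    using U(2) V(2) by (intro join_covers_onI) (auto simp: W_def)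
  finally show ?thesis .
qed

locale finite_cover_family =
  fixes X :: "'a set" and C :: "'i \<Rightarrow> 'a set set"
  assumes finite_cover: "\<And>i. finite (C i)"
    and covers: "\<And>i. X \<subseteq> \<Union>(C i)"
begin

lemma finite_join_on: "finite I \<Longrightarrow> finite (join_covers_on I C)"
  by (simp add: finite_join_covers_on finite_cover)

lemma join_on_covers: "X \<subseteq> \<Union>(join_covers_on I C)"
  by (simp add: join_covers_on_covers covers)

lemma cover_number_join_attained:
  "finite I \<Longrightarrow> \<exists>B\<subseteq>join_covers_on I C. finite B \<and> X \<subseteq> \<Union>B
      \<and> card B = cover_number X (join_covers_on I C)"
  by (intro cover_number_attained finite_join_on join_on_covers)

lemma cover_number_join_mono:
  assumes "I \<subseteq> J" "finite J"
  shows "cover_number X (join_covers_on I C) \<le> cover_number X (join_covers_on J C)"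
proof (rule cover_number_le_if_refines)
  show "\<forall>W\<in>join_covers_on J C. \<exists>V\<in>join_covers_on I C. W \<subseteq> V"
    using assms(1) unfolding join_covers_on_def by blast
qed (use assms(2) finite_join_on join_on_covers in auto)

lemma cover_number_join_union_le:
  assumes "I \<inter> J = {}" "finite I" "finite J"
  shows "cover_number X (join_covers_on (I \<union> J) C)
    \<le> cover_number X (join_covers_on I C) * cover_number X (join_covers_on J C)"
proof -
  obtain B1 where B1: "B1 \<subseteq> join_covers_on I C" "finite B1" "X \<subseteq> \<Union>B1"
      "card B1 = cover_number X (join_covers_on I C)"
    using cover_number_join_attained[OF assms(2)] by blast
  obtain B2 where B2: "B2 \<subseteq> join_covers_on J C" "finite B2" "X \<subseteq> \<Union>B2"
      "card B2 = cover_number X (join_covers_on J C)"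
    using cover_number_join_attained[OF assms(3)] by blast
  have "cover_number X (join_covers_on (I \<union> J) C) \<le> card ((\<lambda>(P, Q). P \<inter> Q) ` (B1 \<times> B2))"
  proof (rule cover_number_le_card)
    show "(\<lambda>(P, Q). P \<inter> Q) ` (B1 \<times> B2) \<subseteq> join_covers_on (I \<union> J) C"
      using B1(1) B2(1) by (auto intro!: Int_mem_join_covers_on_Un[OF assms(1)])
    show "finite ((\<lambda>(P, Q). P \<inter> Q) ` (B1 \<times> B2))" using B1(2) B2(2) by simp
    show "X \<subseteq> \<Union>((\<lambda>(P, Q). P \<inter> Q) ` (B1 \<times> B2))" using B1(3) B2(3) by blast
  qed
  also have "\<dots> \<le> card B1 * card B2"
    using card_image_le[of "B1 \<times> B2"] B1(2) B2(2) by (simp add: card_cartesian_product)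
  finally show ?thesis using B1(4) B2(4) by simp
qed

end

lemma limsup_ln_cover_number_join_shift:
  fixes C :: "nat \<Rightarrow> 'a set set"
  assumes "finite_cover_family X C" and card_le: "\<And>i. card (C i) \<le> q"
  shows "limsup (\<lambda>M. ereal (ln (real (cover_number X (join_covers M (\<lambda>i. C (i + n))))) / real M))
    = limsup (\<lambda>M. ereal (ln (real (cover_number X (join_covers M C))) / real M))"
proof -
  interpret finite_cover_family X C by fact
  define N where "N I = cover_number X (join_covers_on I C)" for I
  have tail: "cover_number X (join_covers M (\<lambda>i. C (i + n))) = N {n + 1..n + M}" for M
    using join_covers_on_reindex[of "\<lambda>i. i + n" "{1..M}" C]
    by (simp add: N_def join_covers_eq_join_covers_on comp_def add.commute)
  have split: "{1..n + M} = {1..n} \<union> {n + 1..n + M}" for M by auto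
  show ?thesis
    unfolding tail unfolding join_covers_eq_join_covers_on N_def[symmetric]
  proof (rule limsup_growth_rate_eq_if_shift_bounded
      [where a = "\<lambda>M. ln (real (N {1..M}))" and b = "\<lambda>M. ln (real (N {n + 1..n + M}))"
        and n = n and c = "ln (real (N {1..n}))" and L = "ln (real q)"])
    show "0 \<le> ln (real (N {n + 1..n + M}))" for M
      by (rule ln_of_nat_nonneg)
    show "ln (real (N {n + 1..n + M})) \<le> ln (real (N {1..M + n}))" for M
      unfolding N_def by (intro ln_of_nat_mono cover_number_join_mono) auto
    show "ln (real (N {1..M + n})) \<le> ln (real (N {n + 1..n + M})) + ln (real (N {1..n}))" for M
    proof -
      have "N {1..M + n} \<le> N {1..n} * N {n + 1..n + M}"
        unfolding N_def add.commute[of M] split by (rule cover_number_join_union_le) auto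
      hence "ln (real (N {1..M + n})) \<le> ln (real (N {1..n} * N {n + 1..n + M}))"
        by (rule ln_of_nat_mono)
      also have "\<dots> \<le> ln (real (N {1..n})) + ln (real (N {n + 1..n + M}))"
        by (rule ln_of_nat_mult_le)
      finally show ?thesis by simp
    qed
    show "ln (real (N {1..M})) \<le> real M * ln (real q)" for M
    proof -
      have "N {1..M} \<le> card (join_covers_on {1..M} C)"
        unfolding N_def by (intro cover_number_le_card finite_join_on join_on_covers) auto
      also have "\<dots> \<le> (\<Prod>i\<in>{1..M}. card (C i))"
        using finite_cover by (intro card_join_covers_on_le) auto
      also have "\<dots> \<le> q ^ M"
        using prod_mono[of "{1..M}" "\<lambda>i. card (C i)" "\<lambda>_. q"] card_le by simp
      finally have "ln (real (N {1..M})) \<le> ln (real (q ^ M))"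
        by (rule ln_of_nat_mono)
      thus ?thesis by (simp only: ln_of_nat_power)
    qed
  qed
qed

lemma finite_cover_family_preimage_covers:
  assumes "\<A> \<in> open_covers X" "\<And>i. g i ` X \<subseteq> X"
  shows "finite_cover_family X (\<lambda>i. preimage_cover X (g i) \<A>)"
proof
  show "finite (preimage_cover X (g i) \<A>)" for i
    using assms(1) by (simp add: open_covers_def preimage_cover_def)
  show "X \<subseteq> \<Union>(preimage_cover X (g i) \<A>)" for i
    using assms unfolding open_covers_def preimage_cover_def by (auto simp: image_subset_iff)
qed

lemma card_preimage_cover_le: "finite \<A> \<Longrightarrow> card (preimage_cover X g \<A>) \<le> card \<A>"
  unfolding preimage_cover_def by (rule card_image_le)

lemma iter_from_add: "iter_from f i (p + q) = iter_from f (i + p) q \<circ> iter_from f i p"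
  by (induction q) (auto simp: add.assoc)

lemma iter_from_comp_system: "iter_from (comp_system f m) 0 a = iter_from f 0 (a * m)"
proof (induction a)
  case (Suc a)
  have "iter_from f 0 (a * m + m) = iter_from f (a * m) m \<circ> iter_from f 0 (a * m)"
    by (simp add: iter_from_add)
  thus ?case using Suc by (simp add: comp_system_def add.commute)
qed simp

lemma iter_from_image_subset: "(\<And>i. f i ` X \<subseteq> X) \<Longrightarrow> iter_from f i p ` X \<subseteq> X"
  by (induction p) (auto simp: image_subset_iff)

lemma seq_entropy_eq_if_times_shifted:
  assumes "\<And>i. g i ` X \<subseteq> X"
    and shifted: "\<And>i. iter_from h 0 (b i) = iter_from g 0 (a (i + n))"
  shows "seq_entropy X b h = seq_entropy X a g"
  unfolding seq_entropy_def
proof (rule SUP_cong[OF refl])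
  fix \<A> assume \<A>: "\<A> \<in> open_covers X"
  define C where "C i = preimage_cover X (iter_from g 0 (a i)) \<A>" for i
  have "finite_cover_family X C"
    unfolding C_def using \<A> iter_from_image_subset[OF assms(1)]
    by (rule finite_cover_family_preimage_covers)
  moreover have "card (C i) \<le> card \<A>" for i
    using \<A> by (simp add: C_def open_covers_def card_preimage_cover_le)
  ultimately have "limsup (\<lambda>m. ereal (ln (real (cover_number X (join_covers m (\<lambda>i. C (i + n))))) / real m))
    = limsup (\<lambda>m. ereal (ln (real (cover_number X (join_covers m C))) / real m))"
    by (rule limsup_ln_cover_number_join_shift)
  thus "limsup (\<lambda>m. ereal (ln (real (cover_number X (join_covers m
        (\<lambda>i. preimage_cover X (iter_from h 0 (b i)) \<A>)))) / real m))
    = limsup (\<lambda>m. ereal (ln (real (cover_number X (join_covers m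
        (\<lambda>i. preimage_cover X (iter_from g 0 (a i)) \<A>)))) / real m))"
    by (simp add: C_def[abs_def] shifted)
qed

theorem proposition4p2:
  fixes X :: "'a::metric_space set" and f :: "nat \<Rightarrow> 'a \<Rightarrow> 'a" and k n :: nat
  assumes "compact X"
    and "\<And>i. continuous_on X (f i)"
    and "\<And>i. f i ` X \<subseteq> X"
    and "k \<ge> 1"
    and "n \<ge> 1"
  shows "seq_entropy X (\<lambda>i. k ^ i) (comp_system f (k ^ n)) = seq_entropy X (\<lambda>i. k ^ i) f"
proof (rule seq_entropy_eq_if_times_shifted)
  show "f i ` X \<subseteq> X" for i by (fact assms(3))
  show "iter_from (comp_system f (k ^ n)) 0 (k ^ i) = iter_from f 0 (k ^ (i + n))" for i
    by (simp add: iter_from_comp_system power_add)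
qed

end
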